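(* Let $(\Omega,\mathcal{A},\{\mathcal{F}_t\}_{t\ge0},\mathbb{P})$ be a filtered probability space, where $\mathcal{F}_t=\sigma(Z_1(s),\dots,Z_m(s);\,0\le s\le t)$ is generated by finitely many stochastic factors. Let the log-price process $\{P(t)\}$ satisfy $dP(t)=\varsigma(t)\,dB(N(t))$, $t\in[0,T]$, where: (a) $N$ is an $\mathcal{F}_t$-adapted counting process with unit jumps having a positive, $\mathcal{F}_t$-predictable intensity $\lambda$ that is left-continuous with right-hand limits and $\int_0^t\lambda(s)ds<\infty$ a.s. for all $t$; (b) $\{B(n)\}_{n\ge0}$ is a Brownian motion with $B(N(t))$ $\mathcal{F}_t$-adapted; (c) $\varsigma$ is positive, continuous and $\mathcal{F}_t$-predictable. Assume $B$ is independent of $N$ and of $\varsigma$, and that $\mathbb{E}[\int_t^T\varsigma^2(r)\lambda(r)dr\mid\mathcal{F}_t]$, $\mathbb{E}[\varsigma^4(t)]$ and $\mathbb{E}[\int_0^t\varsigma^4(r)\lambda(r)dr]$ exist and are finite for all $t\in[0,T]$. Then $$\mathbb{E}\big[r_{\mathrm{daily}}^2-\mathrm{IV}(0,T)\big]=0,$$ where $r_{\mathrm{daily}}:=P(T)-P(0)$ and $\mathrm{IV}(0,T):=\int_0^T\varsigma^2(r)\lambda(r)\,dr$.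
   Context: The integral $\int_s^t\varsigma(r)\,dB(N(r))$ is defined pathwise as $\sum_{s<t_i\le t}\varsigma(t_i)U_i$, where $t_i$ are the jump times of $N$ and $U_i:=B(N(t_i))-B(N(t_{i-1}))$. *)

theory Defs
  imports "HOL-Probability.Probability"
begin

definition factor_filtration ::
  "'a measure \<Rightarrow> (nat \<Rightarrow> real \<Rightarrow> 'a \<Rightarrow> real) \<Rightarrow> nat \<Rightarrow> real \<Rightarrow> 'a measure" where
  "factor_filtration M Z m t =
     sigma (space M) {Z i s -` A \<inter> space M | i s A. i < m \<and> 0 \<le> s \<and> s \<le> t \<and> A \<in> sets borel}"

definition predictable_sigma :: "(real \<Rightarrow> 'a measure) \<Rightarrow> 'a measure \<Rightarrow> (real \<times> 'a) measure" where
  "predictable_sigma F M =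
     sigma ({0..} \<times> space M)
       ({{0} \<times> A | A. A \<in> sets (F 0)} \<union>
        {{s<..t} \<times> A | s t A. 0 \<le> s \<and> s \<le> t \<and> A \<in> sets (F s)})"

definition predictable :: "(real \<Rightarrow> 'a measure) \<Rightarrow> 'a measure \<Rightarrow> (real \<Rightarrow> 'a \<Rightarrow> real) \<Rightarrow> bool" where
  "predictable F M X \<longleftrightarrow> (\<lambda>(t, \<omega>). X t \<omega>) \<in> borel_measurable (predictable_sigma F M)"

definition counting_process :: "'a measure \<Rightarrow> (real \<Rightarrow> 'a \<Rightarrow> nat) \<Rightarrow> bool" where
  "counting_process M N \<longleftrightarrow>
     (\<forall>t. N t \<in> measurable M (count_space UNIV)) \<and>
     (\<forall>\<omega>\<in>space M.
        N 0 \<omega> = 0 \<and>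
        mono_on {0..} (\<lambda>t. N t \<omega>) \<and>
        (\<forall>t\<ge>0. continuous (at_right t) (\<lambda>s. real (N s \<omega>))) \<and>
        (\<forall>t>0. ((\<lambda>s. real (N s \<omega>)) \<longlongrightarrow> real (N t \<omega>)) (at_left t) \<or>
               ((\<lambda>s. real (N s \<omega>)) \<longlongrightarrow> real (N t \<omega>) - 1) (at_left t)))"

definition jump_times :: "(real \<Rightarrow> 'a \<Rightarrow> nat) \<Rightarrow> 'a \<Rightarrow> real set" where
  "jump_times N \<omega> = {t. 0 < t \<and> \<not> ((\<lambda>s. real (N s \<omega>)) \<longlongrightarrow> real (N t \<omega>)) (at_left t)}"

definition has_intensity ::
  "'a measure \<Rightarrow> (real \<Rightarrow> 'a measure) \<Rightarrow> (real \<Rightarrow> 'a \<Rightarrow> nat) \<Rightarrow> (real \<Rightarrow> 'a \<Rightarrow> real) \<Rightarrow> bool" where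
  "has_intensity M F N lam \<longleftrightarrow>
     predictable F M lam \<and> (\<forall>\<omega>\<in>space M. \<forall>t\<ge>0. 0 \<le> lam t \<omega>) \<and>
     (\<forall>C. predictable F M C \<longrightarrow> (\<forall>\<omega>\<in>space M. \<forall>t\<ge>0. 0 \<le> C t \<omega>) \<longrightarrow>
        (\<forall>t\<ge>0.
          (\<integral>\<^sup>+ \<omega>. ennreal (\<Sum>s\<in>{s\<in>jump_times N \<omega>. s \<le> t}. C s \<omega>) \<partial>M) =
          (\<integral>\<^sup>+ \<omega>. (\<integral>\<^sup>+ s\<in>{0<..t}. ennreal (C s \<omega> * lam s \<omega>) \<partial>lborel) \<partial>M)))"

definition brownian_motion :: "'a measure \<Rightarrow> (real \<Rightarrow> 'a \<Rightarrow> real) \<Rightarrow> bool" where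
  "brownian_motion M B \<longleftrightarrow>
     (\<forall>t. B t \<in> borel_measurable M) \<and>
     (\<forall>\<omega>\<in>space M. B 0 \<omega> = 0 \<and> continuous_on {0..} (\<lambda>t. B t \<omega>)) \<and>
     (\<forall>s t. 0 \<le> s \<longrightarrow> s < t \<longrightarrow>
        distributed M lborel (\<lambda>\<omega>. B t \<omega> - B s \<omega>) (normal_density 0 (sqrt (t - s)))) \<and>
     (\<forall>(ts :: nat \<Rightarrow> real) n. (\<forall>i\<le>n. 0 \<le> ts i) \<longrightarrow> (\<forall>i<n. ts i < ts (Suc i)) \<longrightarrow>
        prob_space.indep_vars M (\<lambda>_. borel) (\<lambda>i \<omega>. B (ts (Suc i)) \<omega> - B (ts i) \<omega>) {..<n})"

text \<open>Pathwise integral int_(s,t] sig(r) dB(N(r)) = sum over jump times t_i in (s,t] of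
  sig(t_i) U_i, with U_i = B(N(t_i)) - B(N(t_{i-1})) = B(N(t_i)) - B(N(t_i) - 1) (unit jumps).\<close>
definition jump_integral ::
  "(real \<Rightarrow> 'a \<Rightarrow> nat) \<Rightarrow> (real \<Rightarrow> 'a \<Rightarrow> real) \<Rightarrow> (real \<Rightarrow> 'a \<Rightarrow> real) \<Rightarrow> real \<Rightarrow> real \<Rightarrow> 'a \<Rightarrow> real" where
  "jump_integral N B sig s t \<omega> =
     (\<Sum>u\<in>{u\<in>jump_times N \<omega>. s < u \<and> u \<le> t}.
        sig u \<omega> * (B (real (N u \<omega>)) \<omega> - B (real (N u \<omega>) - 1) \<omega>))"

end

theory Submission
  imports Defs
begin

(* On each path the jump times in (0,T] are the first-passage times tau_1 < ... < tau_N(T) of N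
   through the levels 1, ..., N(T), so r_daily = sum_{k <= N(T)} sig(tau_k) U_k with
   U_k = B(k) - B(k-1) independent standard normal.  As sig is continuous, sig(tau_k) is a limit
   of values of sig at dyadic grid points, so the weights and N(T) are measurable for
   sigma(N, sig), which is independent of B.  On each event {N(T) = j} the cross terms of the
   square then have mean zero, giving E[r_daily^2] = E[sum_{k <= N(T)} sig(tau_k)^2].  By the
   defining property of the intensity this sum over the jumps has the same mean as
   int_0^T sig^2 lambda, that is E[IV(0,T)], which is finite by the first moment condition. *)

section \<open>First-passage times of a counting path\<close>

definition first_passage :: "(real \<Rightarrow> nat) \<Rightarrow> nat \<Rightarrow> real" where
  "first_passage f k = Inf {t. 0 \<le> t \<and> k \<le> f t}"

definition path_jumps :: "(real \<Rightarrow> nat) \<Rightarrow> real set" where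
  "path_jumps f = {t. 0 < t \<and> \<not> ((\<lambda>s. real (f s)) \<longlongrightarrow> real (f t)) (at_left t)}"

lemma jump_times_eq_path_jumps: "jump_times N \<omega> = path_jumps (\<lambda>t. N t \<omega>)"
  by (simp add: jump_times_def path_jumps_def)

(* The value of s at the first grid point i / 2^j at which f has reached k.  Unlike
   s (first_passage f k), it involves f and s only at the fixed times i / 2^j. *)
definition dyadic_passage_approx ::
  "(real \<Rightarrow> nat) \<Rightarrow> (real \<Rightarrow> real) \<Rightarrow> real \<Rightarrow> nat \<Rightarrow> nat \<Rightarrow> real" where
  "dyadic_passage_approx f s T k j =
     (\<Sum>i\<in>{1..nat \<lceil>T * 2^j\<rceil>}.
        if f ((real i - 1) / 2^j) < k \<and> k \<le> f (real i / 2^j) then s (real i / 2^j) else 0)"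

lemma dyadic_ceiling_tendsto:
  fixes t :: real
  shows "(\<lambda>j. of_int \<lceil>t * 2^j\<rceil> / 2^j) \<longlonglongrightarrow> t"
proof (rule tendsto_sandwich[where f = "\<lambda>_. t" and h = "\<lambda>j. t + inverse (2^j)"])
  have "t \<le> of_int \<lceil>t * 2^j\<rceil> / 2^j \<and> of_int \<lceil>t * 2^j\<rceil> / 2^j \<le> t + inverse (2^j)" for j :: nat
    by (simp add: field_simps) linarith
  then show "\<forall>\<^sub>F j in sequentially. t \<le> of_int \<lceil>t * 2^j\<rceil> / 2^j"
    and "\<forall>\<^sub>F j in sequentially. of_int \<lceil>t * 2^j\<rceil> / 2^j \<le> t + inverse (2^j)"
    by simp_all
  show "(\<lambda>j. t + inverse ((2::real)^j)) \<longlonglongrightarrow> t"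
    using tendsto_add[OF tendsto_const LIMSEQ_inverse_realpow_zero[of 2], of t] by simp
qed simp

locale counting_path =
  fixes f :: "real \<Rightarrow> nat"
  assumes start: "f 0 = 0"
    and mono: "mono_on {0..} f"
    and right_cont: "\<And>t. 0 \<le> t \<Longrightarrow> continuous (at_right t) (\<lambda>s. real (f s))"
    and unit_jumps: "\<And>t. 0 < t \<Longrightarrow> ((\<lambda>s. real (f s)) \<longlongrightarrow> real (f t)) (at_left t) \<or>
               ((\<lambda>s. real (f s)) \<longlongrightarrow> real (f t) - 1) (at_left t)"
begin

lemma mono_le: "0 \<le> s \<Longrightarrow> s \<le> t \<Longrightarrow> f s \<le> f t"
  using mono by (auto simp: mono_on_def)

lemma eventually_constant_at_right:
  assumes "0 \<le> t" shows "eventually (\<lambda>s. f s = f t) (at_right t)"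
proof -
  have "eventually (\<lambda>s. dist (real (f s)) (real (f t)) < 1) (at_right t)"
    using right_cont[OF assms] by (intro tendstoD) (simp_all add: continuous_within)
  then show ?thesis
    by eventually_elim (auto simp: dist_real_def abs_less_iff)
qed

lemma left_limit_below_jump:
  assumes "u \<in> path_jumps f"
  shows "((\<lambda>s. real (f s)) \<longlongrightarrow> real (f u) - 1) (at_left u)"
  using unit_jumps[of u] assms by (auto simp: path_jumps_def)

lemma first_passage_level:
  assumes k: "1 \<le> k" and kT: "k \<le> f T" and T: "0 \<le> T"
  shows "0 < first_passage f k" and "f (first_passage f k) = k"
    and "\<And>q. 0 \<le> q \<Longrightarrow> k \<le> f q \<longleftrightarrow> first_passage f k \<le> q"
    and "first_passage f k \<in> path_jumps f"
proof -
  define S where "S = {t. 0 \<le> t \<and> k \<le> f t}"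
  define \<tau> where "\<tau> = first_passage f k"
  have \<tau>_Inf: "\<tau> = Inf S" by (simp add: \<tau>_def first_passage_def S_def)
  have TS: "T \<in> S" using kT T by (simp add: S_def)
  have bdd: "bdd_below S" unfolding S_def by (rule bdd_belowI[of _ 0]) auto
  have \<tau>_nonneg: "0 \<le> \<tau>" unfolding \<tau>_Inf using TS by (intro cInf_greatest) (auto simp: S_def)
  have \<tau>S: "\<tau> \<in> S"
  proof (rule ccontr)
    assume "\<tau> \<notin> S"
    obtain b where b: "b > \<tau>" "\<And>y. \<tau> < y \<Longrightarrow> y < b \<Longrightarrow> f y = f \<tau>"
      using eventually_constant_at_right[OF \<tau>_nonneg] unfolding eventually_at_right_field by blast
    then obtain t where t: "t \<in> S" "t < b"
      using cInf_less_iff[of S b] TS bdd \<tau>_Inf by auto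
    have "\<tau> \<le> t" unfolding \<tau>_Inf by (rule cInf_lower[OF t(1) bdd])
    then show False
      using b(2)[of t] t \<open>\<tau> \<notin> S\<close> \<tau>_nonneg by (cases "t = \<tau>") (auto simp: S_def)
  qed
  show passage_iff: "k \<le> f q \<longleftrightarrow> \<tau> \<le> q" if "0 \<le> q" for q
  proof
    assume "k \<le> f q"
    then show "\<tau> \<le> q" unfolding \<tau>_Inf using that by (intro cInf_lower[OF _ bdd]) (simp add: S_def)
  next
    assume "\<tau> \<le> q"
    then show "k \<le> f q" using \<tau>S mono_le[of \<tau> q] by (simp add: S_def)
  qed
  show \<tau>_pos: "0 < \<tau>" using \<tau>S k start \<tau>_nonneg by (cases "\<tau> = 0") (auto simp: S_def)
  have below: "eventually (\<lambda>s. real (f s) \<le> real k - 1) (at_left \<tau>)"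
    using eventually_at_left_real[OF \<tau>_pos]
  proof eventually_elim
    case (elim s)
    then have "f s < k" using passage_iff[of s] by auto
    then show ?case by linarith
  qed
  have k_le: "k \<le> f \<tau>" using \<tau>S by (simp add: S_def)
  show jump: "\<tau> \<in> path_jumps f"
    unfolding path_jumps_def using \<tau>_pos tendsto_upperbound[OF _ below] k_le by force
  have "real (f \<tau>) - 1 \<le> real k - 1"
    using tendsto_upperbound[OF left_limit_below_jump[OF jump] below] by simp
  then show "f \<tau> = k" using k_le by linarith
qed

lemma first_passage_of_jump:
  assumes u: "u \<in> path_jumps f"
  shows "1 \<le> f u" and "first_passage f (f u) = u"
proof -
  have u_pos: "0 < u" using u by (simp add: path_jumps_def)
  have before: "real (f s) \<le> real (f u) - 1" if "0 \<le> s" "s < u" for s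
  proof (rule tendsto_lowerbound[OF left_limit_below_jump[OF u]])
    show "eventually (\<lambda>x. real (f s) \<le> real (f x)) (at_left u)"
      using eventually_at_left_real[OF that(2)]
      by eventually_elim (use that in \<open>auto intro!: mono_le\<close>)
  qed simp
  from before[of 0] u_pos start show "1 \<le> f u" by simp
  define S where "S = {t. 0 \<le> t \<and> f u \<le> f t}"
  have uS: "u \<in> S" using u_pos by (simp add: S_def)
  have "Inf S = u"
  proof (rule antisym)
    show "Inf S \<le> u" by (rule cInf_lower[OF uS]) (auto simp: S_def intro: bdd_belowI[of _ 0])
    show "u \<le> Inf S"
      using uS before by (intro cInf_greatest) (force simp: S_def not_le[symmetric])+
  qed
  then show "first_passage f (f u) = u" by (simp add: first_passage_def S_def)
qed

lemma bij_betw_jumps_levels: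
  assumes "0 \<le> T"
  shows "bij_betw f {u \<in> path_jumps f. u \<le> T} {1..f T}"
proof (rule bij_betw_byWitness[where f' = "first_passage f"])
  show "\<forall>u\<in>{u \<in> path_jumps f. u \<le> T}. first_passage f (f u) = u"
    using first_passage_of_jump by blast
  show "\<forall>k\<in>{1..f T}. f (first_passage f k) = k"
    using first_passage_level[OF _ _ assms] by auto
  show "f ` {u \<in> path_jumps f. u \<le> T} \<subseteq> {1..f T}"
    using first_passage_of_jump(1) mono_le by (force simp: path_jumps_def)
  show "first_passage f ` {1..f T} \<subseteq> {u \<in> path_jumps f. u \<le> T}"
    using first_passage_level[OF _ _ assms] assms by fastforce
qed

lemma sum_over_jumps:
  assumes "0 \<le> T"
  shows "(\<Sum>u\<in>{u \<in> path_jumps f. u \<le> T}. h u (f u)) = (\<Sum>k\<in>{1..f T}. h (first_passage f k) k)"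
  using sum.reindex_bij_betw[OF bij_betw_jumps_levels[OF assms], of "\<lambda>k. h (first_passage f k) k"]
  by (auto simp: first_passage_of_jump intro: sum.cong)

lemma dyadic_passage_approx_eq:
  assumes k: "1 \<le> k" "k \<le> f T" and T: "0 \<le> T"
  shows "dyadic_passage_approx f s T k j = s (of_int \<lceil>first_passage f k * 2^j\<rceil> / 2^j)"
proof -
  define \<tau> where "\<tau> = first_passage f k"
  define i\<^sub>0 where "i\<^sub>0 = nat \<lceil>\<tau> * 2^j\<rceil>"
  have \<tau>: "0 < \<tau>" "\<tau> \<le> T" "\<And>q. 0 \<le> q \<Longrightarrow> k \<le> f q \<longleftrightarrow> \<tau> \<le> q"
    using first_passage_level[OF k T] k(2) T unfolding \<tau>_def by blast+
  have ceil: "1 \<le> \<lceil>\<tau> * 2^j\<rceil>" "\<lceil>\<tau> * 2^j\<rceil> \<le> \<lceil>T * 2^j\<rceil>"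
    using \<tau> by (simp_all add: ceiling_mono)
  then have i\<^sub>0: "i\<^sub>0 \<in> {1..nat \<lceil>T * 2^j\<rceil>}"
    unfolding i\<^sub>0_def atLeastAtMost_iff by (intro conjI nat_mono) (simp_all add: le_nat_iff)
  have "(f ((real i - 1) / 2^j) < k \<and> k \<le> f (real i / 2^j)) \<longleftrightarrow> i = i\<^sub>0"
    if "i \<in> {1..nat \<lceil>T * 2^j\<rceil>}" for i
  proof -
    have "(f ((real i - 1) / 2^j) < k \<and> k \<le> f (real i / 2^j)) \<longleftrightarrow>
          ((real i - 1) / 2^j < \<tau> \<and> \<tau> \<le> real i / 2^j)"
      using that \<tau>(3)[of "(real i - 1) / 2^j"] \<tau>(3)[of "real i / 2^j"] by auto
    also have "\<dots> \<longleftrightarrow> \<lceil>\<tau> * 2^j\<rceil> = int i"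
      by (simp add: ceiling_eq_iff divide_less_eq le_divide_eq)
    also have "\<dots> \<longleftrightarrow> i = i\<^sub>0" using ceil(1) unfolding i\<^sub>0_def by auto
    finally show ?thesis .
  qed
  then have "dyadic_passage_approx f s T k j =
      (\<Sum>i\<in>{1..nat \<lceil>T * 2^j\<rceil>}. if i = i\<^sub>0 then s (real i / 2^j) else 0)"
    unfolding dyadic_passage_approx_def by (intro sum.cong) auto
  also have "\<dots> = s (of_int \<lceil>\<tau> * 2^j\<rceil> / 2^j)"
    using i\<^sub>0 \<tau>(1) by (simp add: i\<^sub>0_def)
  finally show ?thesis by (simp add: \<tau>_def)
qed

lemma dyadic_passage_approx_tendsto:
  assumes k: "1 \<le> k" "k \<le> f T" and T: "0 \<le> T" and s: "continuous_on {0..} s"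
  shows "(\<lambda>j. dyadic_passage_approx f s T k j) \<longlonglongrightarrow> s (first_passage f k)"
proof -
  have pos: "0 < first_passage f k" using first_passage_level(1)[OF k T] .
  have "(\<lambda>j. s (of_int \<lceil>first_passage f k * 2^j\<rceil> / 2^j)) \<longlonglongrightarrow> s (first_passage f k)"
  proof (rule continuous_on_tendsto_compose[OF s dyadic_ceiling_tendsto])
    have "0 < first_passage f k * 2^j" for j :: nat using pos by simp
    then show "\<forall>\<^sub>F j in sequentially. of_int \<lceil>first_passage f k * 2^j\<rceil> / (2::real)^j \<in> {0..}"
      by (intro always_eventually allI) (simp add: order.strict_implies_order)
  qed (use pos in simp)
  then show ?thesis by (simp add: dyadic_passage_approx_eq[OF k T])
qed

end

lemma counting_process_path:
  assumes "counting_process M N" "\<omega> \<in> space M"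
  shows "counting_path (\<lambda>t. N t \<omega>)"
  using assms unfolding counting_process_def by (intro counting_path.intro) auto

lemma measurable_first_passage_value:
  fixes N :: "real \<Rightarrow> 'a \<Rightarrow> nat" and X :: "real \<Rightarrow> 'a \<Rightarrow> real"
  assumes paths: "\<And>\<omega>. \<omega> \<in> space G \<Longrightarrow> counting_path (\<lambda>t. N t \<omega>)"
    and N: "\<And>t. 0 \<le> t \<Longrightarrow> N t \<in> measurable G (count_space UNIV)"
    and X: "\<And>t. 0 \<le> t \<Longrightarrow> X t \<in> borel_measurable G"
    and X_cont: "\<And>\<omega>. \<omega> \<in> space G \<Longrightarrow> continuous_on {0..} (\<lambda>t. X t \<omega>)"
    and T: "0 \<le> T"
  shows "(\<lambda>\<omega>. if k \<in> {1..N T \<omega>} then X (first_passage (\<lambda>t. N t \<omega>) k) \<omega> else 0) \<in> borel_measurable G"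
proof (rule borel_measurable_LIMSEQ_real)
  fix \<omega> assume \<omega>: "\<omega> \<in> space G"
  show "(\<lambda>j. if k \<in> {1..N T \<omega>} then dyadic_passage_approx (\<lambda>t. N t \<omega>) (\<lambda>t. X t \<omega>) T k j else 0)
      \<longlonglongrightarrow> (if k \<in> {1..N T \<omega>} then X (first_passage (\<lambda>t. N t \<omega>) k) \<omega> else 0)"
    using counting_path.dyadic_passage_approx_tendsto[OF paths[OF \<omega>] _ _ T X_cont[OF \<omega>]]
    by (cases "1 \<le> k \<and> k \<le> N T \<omega>") auto
next
  have pred_N: "Measurable.pred G (\<lambda>\<omega>. P (N t \<omega>))" if "0 \<le> t" for P t
    using measurable_compose[OF N[OF that], of P] by simp
  fix j
  have "(\<lambda>\<omega>. if N ((real i - 1) / 2^j) \<omega> < k \<and> k \<le> N (real i / 2^j) \<omega> then X (real i / 2^j) \<omega> else 0)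
      \<in> borel_measurable G" if "i \<in> {1..nat \<lceil>T * 2^j\<rceil>}" for i
  proof -
    have "0 \<le> (real i - 1) / 2^j" using that by simp
    then have "Measurable.pred G (\<lambda>\<omega>. N ((real i - 1) / 2^j) \<omega> < k \<and> k \<le> N (real i / 2^j) \<omega>)"
      by (intro pred_intros_logic pred_N[where P = "\<lambda>n. n < k"] pred_N[where P = "\<lambda>n. k \<le> n"]) simp_all
    then show ?thesis by (intro measurable_If X) auto
  qed
  then show "(\<lambda>\<omega>. if k \<in> {1..N T \<omega>} then dyadic_passage_approx (\<lambda>t. N t \<omega>) (\<lambda>t. X t \<omega>) T k j else 0)
      \<in> borel_measurable G"
    unfolding dyadic_passage_approx_def
    using T by (intro measurable_If[OF borel_measurable_sum] predE pred_N[where P = "\<lambda>n. k \<in> {1..n}"]) auto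
qed

section \<open>Orthogonality of Brownian increments against an independent sigma-algebra\<close>

lemma (in prob_space) indep_set_sigma_subalgebras:
  assumes indep: "indep_set (sigma_sets (space M) G\<^sub>1) (sigma_sets (space M) G\<^sub>2)"
    and G: "G\<^sub>1 \<subseteq> Pow (space M)" "G\<^sub>2 \<subseteq> Pow (space M)"
  shows "indep_set (sets (sigma (space M) G\<^sub>1)) (sets (sigma (space M) G\<^sub>2))"
    and "subalgebra M (sigma (space M) G\<^sub>1)" and "subalgebra M (sigma (space M) G\<^sub>2)"
  using indep indep_setD_ev1[OF indep] indep_setD_ev2[OF indep] G
  by (simp_all add: subalgebra_def)

lemma (in prob_space) indep_set_integral_mult:
  fixes X Y :: "'a \<Rightarrow> real"
  assumes indep: "indep_set (sets MX) (sets MY)"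
    and sub: "subalgebra M MX" "subalgebra M MY"
    and X: "X \<in> borel_measurable MX" "integrable M X"
    and Y: "Y \<in> borel_measurable MY" "integrable M Y"
  shows "integrable M (\<lambda>\<omega>. X \<omega> * Y \<omega>)"
    and "expectation (\<lambda>\<omega>. X \<omega> * Y \<omega>) = expectation X * expectation Y"
proof -
  have generated_sub: "sigma_sets (space M) {Z -` A \<inter> space M | A. A \<in> sets borel} \<subseteq> sets MZ"
    if "subalgebra M MZ" "Z \<in> borel_measurable MZ" for Z :: "'a \<Rightarrow> real" and MZ
  proof -
    have "{Z -` A \<inter> space M | A. A \<in> sets borel} \<subseteq> sets MZ"
      using that measurable_sets[OF that(2)] by (auto simp: subalgebra_def)
    then show ?thesis
      using sets.sigma_sets_subset[of _ MZ] that(1) by (simp add: subalgebra_def)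
  qed
  have "indep_var borel X borel Y"
    unfolding indep_var_eq
  proof (intro conjI measurable_from_subalg[OF sub(1) X(1)] measurable_from_subalg[OF sub(2) Y(1)])
    show "indep_set (sigma_sets (space M) {X -` A \<inter> space M | A. A \<in> sets borel})
        (sigma_sets (space M) {Y -` A \<inter> space M | A. A \<in> sets borel})"
      using generated_sub[OF sub(1) X(1)] generated_sub[OF sub(2) Y(1)]
        indep_setD[OF indep] indep_setD_ev1[OF indep] indep_setD_ev2[OF indep]
      by (intro indep_setI) auto
  qed
  then show "integrable M (\<lambda>\<omega>. X \<omega> * Y \<omega>)"
    and "expectation (\<lambda>\<omega>. X \<omega> * Y \<omega>) = expectation X * expectation Y"
    using indep_var_integrable indep_var_lebesgue_integral X(2) Y(2) by blast+
qed

definition unit_increment :: "(real \<Rightarrow> 'a \<Rightarrow> real) \<Rightarrow> nat \<Rightarrow> 'a \<Rightarrow> real" where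
  "unit_increment B k \<omega> = B (real k) \<omega> - B (real k - 1) \<omega>"

lemma (in prob_space) unit_increment_std_normal:
  assumes "brownian_motion M B" "1 \<le> k"
  shows "distributed M lborel (unit_increment B k) std_normal_density"
proof -
  have "\<forall>s\<ge>0. \<forall>t>s. distributed M lborel (\<lambda>\<omega>. B t \<omega> - B s \<omega>) (normal_density 0 (sqrt (t - s)))"
    using assms(1) unfolding brownian_motion_def by blast
  from this[rule_format, of "real k - 1" "real k"] show ?thesis
    using assms(2) by (simp add: unit_increment_def[abs_def])
qed

lemma (in prob_space) unit_increments_orthonormal:
  assumes B: "brownian_motion M B" and kl: "1 \<le> k" "1 \<le> l"
  shows "integrable M (\<lambda>\<omega>. unit_increment B k \<omega> * unit_increment B l \<omega>)"
    and "expectation (\<lambda>\<omega>. unit_increment B k \<omega> * unit_increment B l \<omega>) = (if k = l then 1 else 0)"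
proof -
  let ?U = "unit_increment B"
  have std: "distributed M lborel (?U i) std_normal_density" if "1 \<le> i" for i
    using unit_increment_std_normal[OF B that] .
  have int: "integrable M (?U i)" if "1 \<le> i" for i
    using distributed_integrable_var[OF std[OF that]] integrable_std_normal_moment[of 1] by simp
  have "integrable M (\<lambda>\<omega>. ?U l \<omega> * ?U l \<omega>) \<and> expectation (\<lambda>\<omega>. ?U l \<omega> * ?U l \<omega>) = 1"
    using distributed_integrable[OF std[OF kl(2)], of "\<lambda>x. x\<^sup>2"] integrable_std_normal_moment[of 2]
      standard_normal_distributed_variance[OF std[OF kl(2)]]
      standard_normal_distributed_expectation[OF std[OF kl(2)]]
    by (simp add: power2_eq_square mult.commute)
  moreover have "integrable M (\<lambda>\<omega>. ?U k \<omega> * ?U l \<omega>) \<and> expectation (\<lambda>\<omega>. ?U k \<omega> * ?U l \<omega>) = 0"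
    if "k \<noteq> l"
  proof -
    have "indep_vars (\<lambda>_. borel) (\<lambda>i. ?U (Suc i)) {..<max k l}"
      using B unfolding brownian_motion_def
      by (auto simp: unit_increment_def[abs_def] elim!: allE[of _ "\<lambda>i. real i"] allE[of _ "max k l"])
    then have "indep_vars (\<lambda>_. borel) (\<lambda>i. ?U (Suc i)) {k - 1, l - 1}"
      by (rule indep_vars_subset) (use kl in auto)
    then show ?thesis
      using indep_vars_integrable[of "{k - 1, l - 1}" "\<lambda>i. ?U (Suc i)"]
        indep_vars_lebesgue_integral[of "{k - 1, l - 1}" "\<lambda>i. ?U (Suc i)"]
        int standard_normal_distributed_expectation[OF std] kl that
      by auto
  qed
  ultimately show "integrable M (\<lambda>\<omega>. ?U k \<omega> * ?U l \<omega>)"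
    and "expectation (\<lambda>\<omega>. ?U k \<omega> * ?U l \<omega>) = (if k = l then 1 else 0)"
    by (cases "k = l"; simp)+
qed

lemma (in prob_space) indep_orthonormal_quadratic_form:
  fixes c :: "nat \<Rightarrow> nat \<Rightarrow> 'a \<Rightarrow> real" and U :: "nat \<Rightarrow> 'a \<Rightarrow> real"
  assumes indep: "indep_set (sets MU) (sets MG)" and sub: "subalgebra M MU" "subalgebra M MG"
    and I: "finite I"
    and c: "\<And>k l. k \<in> I \<Longrightarrow> l \<in> I \<Longrightarrow> c k l \<in> borel_measurable MG"
      "\<And>k l. k \<in> I \<Longrightarrow> l \<in> I \<Longrightarrow> integrable M (c k l)"
    and U: "\<And>k. k \<in> I \<Longrightarrow> U k \<in> borel_measurable MU"
      "\<And>k l. k \<in> I \<Longrightarrow> l \<in> I \<Longrightarrow> integrable M (\<lambda>\<omega>. U k \<omega> * U l \<omega>)"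
    and orth: "\<And>k l. k \<in> I \<Longrightarrow> l \<in> I \<Longrightarrow>
      expectation (\<lambda>\<omega>. U k \<omega> * U l \<omega>) = (if k = l then 1 else 0)"
  shows "integrable M (\<lambda>\<omega>. \<Sum>k\<in>I. \<Sum>l\<in>I. U k \<omega> * U l \<omega> * c k l \<omega>)"
    and "expectation (\<lambda>\<omega>. \<Sum>k\<in>I. \<Sum>l\<in>I. U k \<omega> * U l \<omega> * c k l \<omega>) =
      (\<Sum>k\<in>I. expectation (c k k))"
proof -
  have UU: "(\<lambda>\<omega>. U k \<omega> * U l \<omega>) \<in> borel_measurable MU" if "k \<in> I" "l \<in> I" for k l
    using U(1) that by simp
  note summand = indep_set_integral_mult[OF indep sub UU U(2) c(1) c(2)]
  show "integrable M (\<lambda>\<omega>. \<Sum>k\<in>I. \<Sum>l\<in>I. U k \<omega> * U l \<omega> * c k l \<omega>)"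
    using summand(1) by (intro Bochner_Integration.integrable_sum) auto
  have "expectation (\<lambda>\<omega>. \<Sum>k\<in>I. \<Sum>l\<in>I. U k \<omega> * U l \<omega> * c k l \<omega>) =
      (\<Sum>k\<in>I. \<Sum>l\<in>I. expectation (\<lambda>\<omega>. U k \<omega> * U l \<omega> * c k l \<omega>))"
    using summand(1) by (simp add: Bochner_Integration.integral_sum)
  also have "\<dots> = (\<Sum>k\<in>I. \<Sum>l\<in>I. if k = l then expectation (c k k) else 0)"
    using summand(2) orth by (intro sum.cong) auto
  also have "\<dots> = (\<Sum>k\<in>I. expectation (c k k))"
    using I by simp
  finally show "expectation (\<lambda>\<omega>. \<Sum>k\<in>I. \<Sum>l\<in>I. U k \<omega> * U l \<omega> * c k l \<omega>) =
      (\<Sum>k\<in>I. expectation (c k k))" .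
qed

lemma abs_mult_le_sum_power2:
  fixes x :: "'i \<Rightarrow> real"
  assumes "finite I" "k \<in> I" "l \<in> I"
  shows "\<bar>x k * x l\<bar> \<le> (\<Sum>i\<in>I. (x i)\<^sup>2)"
proof -
  have "2 * \<bar>x k\<bar> * \<bar>x l\<bar> \<le> (x k)\<^sup>2 + (x l)\<^sup>2"
    using sum_squares_bound[of "\<bar>x k\<bar>" "\<bar>x l\<bar>"] by simp
  moreover have "(x i)\<^sup>2 \<le> (\<Sum>i\<in>I. (x i)\<^sup>2)" if "i \<in> I" for i
    using assms(1) that by (intro member_le_sum) auto
  note this[OF assms(2)] this[OF assms(3)]
  ultimately show ?thesis by (simp add: abs_mult)
qed

lemma (in prob_space) indep_sum_isometry_on_event:
  fixes g U :: "nat \<Rightarrow> 'a \<Rightarrow> real"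
  assumes indep: "indep_set (sets MU) (sets MG)" and sub: "subalgebra M MU" "subalgebra M MG"
    and I: "finite I" and E: "E \<in> sets MG"
    and g: "\<And>k. k \<in> I \<Longrightarrow> g k \<in> borel_measurable MG"
    and U: "\<And>k. k \<in> I \<Longrightarrow> U k \<in> borel_measurable MU"
      "\<And>k l. k \<in> I \<Longrightarrow> l \<in> I \<Longrightarrow> integrable M (\<lambda>\<omega>. U k \<omega> * U l \<omega>)"
    and orth: "\<And>k l. k \<in> I \<Longrightarrow> l \<in> I \<Longrightarrow>
      expectation (\<lambda>\<omega>. U k \<omega> * U l \<omega>) = (if k = l then 1 else 0)"
    and finite_energy: "(\<integral>\<^sup>+\<omega>\<in>E. ennreal (\<Sum>k\<in>I. (g k \<omega>)\<^sup>2) \<partial>M) < \<infinity>"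
  shows "(\<integral>\<^sup>+\<omega>\<in>E. ennreal ((\<Sum>k\<in>I. g k \<omega> * U k \<omega>)\<^sup>2) \<partial>M) =
    (\<integral>\<^sup>+\<omega>\<in>E. ennreal (\<Sum>k\<in>I. (g k \<omega>)\<^sup>2) \<partial>M)"
proof -
  define S where "S \<omega> = (\<Sum>k\<in>I. (g k \<omega>)\<^sup>2) * indicator E \<omega>" for \<omega>
  define c where "c k l \<omega> = g k \<omega> * g l \<omega> * indicator E \<omega>" for k l \<omega>
  define Q where "Q \<omega> = (\<Sum>k\<in>I. \<Sum>l\<in>I. U k \<omega> * U l \<omega> * c k l \<omega>)" for \<omega>
  have E_MG: "(indicator E :: 'a \<Rightarrow> real) \<in> borel_measurable MG"
    using E by simp
  have c_MG: "c k l \<in> borel_measurable MG" if "k \<in> I" "l \<in> I" for k l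
    unfolding c_def using g that E_MG by simp
  have S_M: "S \<in> borel_measurable M"
    unfolding S_def using measurable_from_subalg[OF sub(2) g] measurable_from_subalg[OF sub(2) E_MG]
    by simp
  have S_nonneg: "0 \<le> S \<omega>" for \<omega>
    by (simp add: S_def sum_nonneg)
  have S_int: "integrable M S"
    using S_M S_nonneg finite_energy
    by (intro integrableI_nonneg) (auto simp: S_def nn_integral_set_ennreal)
  have c_int: "integrable M (c k l)" if kl: "k \<in> I" "l \<in> I" for k l
  proof (rule Bochner_Integration.integrable_bound[OF S_int measurable_from_subalg[OF sub(2) c_MG[OF kl]]])
    have "\<bar>g k \<omega> * g l \<omega>\<bar> \<le> (\<Sum>i\<in>I. (g i \<omega>)\<^sup>2)" for \<omega>
      using abs_mult_le_sum_power2[OF I kl] .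
    then show "AE \<omega> in M. norm (c k l \<omega>) \<le> norm (S \<omega>)"
      by (intro AE_I2) (auto simp: c_def S_def sum_nonneg abs_mult split: split_indicator)
  qed
  have Q_eq: "(\<Sum>k\<in>I. g k \<omega> * U k \<omega>)\<^sup>2 * indicator E \<omega> = Q \<omega>" for \<omega>
  proof -
    have "(\<Sum>k\<in>I. g k \<omega> * U k \<omega>)\<^sup>2 * indicator E \<omega> =
        (\<Sum>k\<in>I. \<Sum>l\<in>I. (g k \<omega> * U k \<omega>) * (g l \<omega> * U l \<omega>) * indicator E \<omega>)"
      unfolding power2_eq_square sum_product by (simp add: sum_distrib_right)
    then show ?thesis
      unfolding Q_def c_def by (simp add: mult_ac)
  qed
  have Q: "integrable M Q" "expectation Q = (\<Sum>k\<in>I. expectation (c k k))"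
    unfolding Q_def using c_MG c_int U orth
    by (intro indep_orthonormal_quadratic_form[OF indep sub I]; simp)+
  have "(\<integral>\<^sup>+\<omega>\<in>E. ennreal ((\<Sum>k\<in>I. g k \<omega> * U k \<omega>)\<^sup>2) \<partial>M) = (\<integral>\<^sup>+\<omega>. ennreal (Q \<omega>) \<partial>M)"
    by (simp add: nn_integral_set_ennreal Q_eq)
  also have "\<dots> = ennreal (\<Sum>k\<in>I. expectation (c k k))"
    using Q Q_eq[symmetric] by (subst nn_integral_eq_integral) auto
  also have "(\<Sum>k\<in>I. expectation (c k k)) = expectation S"
  proof -
    have "S = (\<lambda>\<omega>. \<Sum>k\<in>I. c k k \<omega>)"
      by (simp add: fun_eq_iff S_def c_def sum_distrib_right power2_eq_square)
    then show ?thesis using c_int by (simp add: Bochner_Integration.integral_sum)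
  qed
  also have "ennreal (expectation S) = (\<integral>\<^sup>+\<omega>. ennreal (S \<omega>) \<partial>M)"
    using S_int S_nonneg by (simp add: nn_integral_eq_integral)
  also have "\<dots> = (\<integral>\<^sup>+\<omega>\<in>E. ennreal (\<Sum>k\<in>I. (g k \<omega>)\<^sup>2) \<partial>M)"
    by (simp add: S_def nn_integral_set_ennreal)
  finally show ?thesis .
qed

lemma borel_measurable_random_sum:
  fixes n :: "'a \<Rightarrow> nat" and f :: "nat \<Rightarrow> 'a \<Rightarrow> real"
  assumes n: "n \<in> measurable M (count_space UNIV)" and f: "\<And>k. 1 \<le> k \<Longrightarrow> f k \<in> borel_measurable M"
  shows "(\<lambda>\<omega>. \<Sum>k\<in>{1..n \<omega>}. f k \<omega>) \<in> borel_measurable M"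
proof -
  have "(\<lambda>\<omega>. \<Sum>k\<in>{1..j}. f k \<omega>) \<in> borel_measurable M" for j
    using f by (intro borel_measurable_sum) auto
  from measurable_compose_countable[of "\<lambda>j \<omega>. \<Sum>k\<in>{1..j}. f k \<omega>", OF this n] show ?thesis
    by simp
qed

lemma nn_integral_split_levels:
  fixes n :: "'a \<Rightarrow> nat"
  assumes n: "n \<in> measurable M (count_space UNIV)" and f: "f \<in> borel_measurable M"
  shows "(\<integral>\<^sup>+\<omega>. f \<omega> \<partial>M) = (\<Sum>j. \<integral>\<^sup>+\<omega>\<in>n -` {j} \<inter> space M. f \<omega> \<partial>M)"
proof -
  have "disjoint_family (\<lambda>j. n -` {j} \<inter> space M)"
    by (auto simp: disjoint_family_on_def)
  moreover have "(\<Union>j. n -` {j} \<inter> space M) = space M"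
    by auto
  ultimately show ?thesis
    using nn_integral_disjoint_family[OF f, of "\<lambda>j. n -` {j} \<inter> space M"] measurable_sets[OF n]
    by simp
qed

lemma (in prob_space) indep_random_sum_isometry:
  fixes g U :: "nat \<Rightarrow> 'a \<Rightarrow> real" and n :: "'a \<Rightarrow> nat"
  assumes indep: "indep_set (sets MU) (sets MG)" and sub: "subalgebra M MU" "subalgebra M MG"
    and n: "n \<in> measurable MG (count_space UNIV)"
    and g: "\<And>k. g k \<in> borel_measurable MG"
    and U: "\<And>k. 1 \<le> k \<Longrightarrow> U k \<in> borel_measurable MU"
      "\<And>k l. 1 \<le> k \<Longrightarrow> 1 \<le> l \<Longrightarrow> integrable M (\<lambda>\<omega>. U k \<omega> * U l \<omega>)"
    and orth: "\<And>k l. 1 \<le> k \<Longrightarrow> 1 \<le> l \<Longrightarrow>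
      expectation (\<lambda>\<omega>. U k \<omega> * U l \<omega>) = (if k = l then 1 else 0)"
    and finite_energy: "(\<integral>\<^sup>+\<omega>. ennreal (\<Sum>k\<in>{1..n \<omega>}. (g k \<omega>)\<^sup>2) \<partial>M) < \<infinity>"
  shows "(\<integral>\<^sup>+\<omega>. ennreal ((\<Sum>k\<in>{1..n \<omega>}. g k \<omega> * U k \<omega>)\<^sup>2) \<partial>M) =
    (\<integral>\<^sup>+\<omega>. ennreal (\<Sum>k\<in>{1..n \<omega>}. (g k \<omega>)\<^sup>2) \<partial>M)"
proof -
  define E where "E j = n -` {j} \<inter> space M" for j
  have n_M: "n \<in> measurable M (count_space UNIV)"
    by (rule measurable_from_subalg[OF sub(2) n])
  have E_MG: "E j \<in> sets MG" for j
    using measurable_sets[OF n, of "{j}"] sub(2) by (simp add: E_def subalgebra_def)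
  have on_level: "(\<integral>\<^sup>+\<omega>\<in>E j. ennreal ((\<Sum>k\<in>{1..n \<omega>}. g k \<omega> * U k \<omega>)\<^sup>2) \<partial>M) =
      (\<integral>\<^sup>+\<omega>\<in>E j. ennreal (\<Sum>k\<in>{1..n \<omega>}. (g k \<omega>)\<^sup>2) \<partial>M)" for j
  proof -
    have level_sum: "(\<integral>\<^sup>+\<omega>\<in>E j. ennreal (F (n \<omega>) \<omega>) \<partial>M) = (\<integral>\<^sup>+\<omega>\<in>E j. ennreal (F j \<omega>) \<partial>M)"
      for F :: "nat \<Rightarrow> 'a \<Rightarrow> real"
      by (rule set_nn_integral_cong) (auto simp: E_def)
    have "(\<integral>\<^sup>+\<omega>\<in>E j. ennreal (\<Sum>k\<in>{1..j}. (g k \<omega>)\<^sup>2) \<partial>M) =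
        (\<integral>\<^sup>+\<omega>\<in>E j. ennreal (\<Sum>k\<in>{1..n \<omega>}. (g k \<omega>)\<^sup>2) \<partial>M)"
      by (rule level_sum[symmetric])
    also have "\<dots> \<le> (\<integral>\<^sup>+\<omega>. ennreal (\<Sum>k\<in>{1..n \<omega>}. (g k \<omega>)\<^sup>2) \<partial>M)"
      using nn_set_integral_set_mono[of "E j" "space M" M] by (auto simp: E_def)
    finally have "(\<integral>\<^sup>+\<omega>\<in>E j. ennreal (\<Sum>k\<in>{1..j}. (g k \<omega>)\<^sup>2) \<partial>M) < \<infinity>"
      using finite_energy by simp
    then have "(\<integral>\<^sup>+\<omega>\<in>E j. ennreal ((\<Sum>k\<in>{1..j}. g k \<omega> * U k \<omega>)\<^sup>2) \<partial>M) =
        (\<integral>\<^sup>+\<omega>\<in>E j. ennreal (\<Sum>k\<in>{1..j}. (g k \<omega>)\<^sup>2) \<partial>M)"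
      by (intro indep_sum_isometry_on_event[OF indep sub finite_atLeastAtMost E_MG] g U orth) auto
    then show ?thesis
      using level_sum[of "\<lambda>j \<omega>. (\<Sum>k\<in>{1..j}. g k \<omega> * U k \<omega>)\<^sup>2"]
        level_sum[of "\<lambda>j \<omega>. \<Sum>k\<in>{1..j}. (g k \<omega>)\<^sup>2"]
      by simp
  qed
  have g_M: "g k \<in> borel_measurable M" for k
    using measurable_from_subalg[OF sub(2) g] .
  have U_M: "U k \<in> borel_measurable M" if "1 \<le> k" for k
    using measurable_from_subalg[OF sub(1) U(1)[OF that]] .
  have "(\<lambda>\<omega>. \<Sum>k\<in>{1..n \<omega>}. g k \<omega> * U k \<omega>) \<in> borel_measurable M"
    and "(\<lambda>\<omega>. \<Sum>k\<in>{1..n \<omega>}. (g k \<omega>)\<^sup>2) \<in> borel_measurable M"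
    using g_M U_M by (intro borel_measurable_random_sum[OF n_M]; simp)+
  then show ?thesis
    using nn_integral_split_levels[OF n_M] on_level by (simp add: E_def)
qed

section \<open>Predictable integrands and the intensity\<close>

lemma sets_factor_filtration_subset:
  assumes "\<And>i s. i < m \<Longrightarrow> Z i s \<in> borel_measurable M"
  shows "sets (factor_filtration M Z m t) \<subseteq> sets M"
proof -
  let ?G = "{Z i s -` A \<inter> space M | i s A. i < m \<and> 0 \<le> s \<and> s \<le> t \<and> A \<in> sets borel}"
  have "?G \<subseteq> sets M" using assms by (auto intro: measurable_sets)
  moreover have "?G \<subseteq> Pow (space M)" by auto
  ultimately show ?thesis
    by (simp add: factor_filtration_def sets.sigma_sets_subset)
qed

lemma predictable_mult:
  assumes "predictable F M X" "predictable F M Y"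
  shows "predictable F M (\<lambda>t \<omega>. X t \<omega> * Y t \<omega>)"
  using borel_measurable_times[OF assms[unfolded predictable_def]]
  by (simp add: predictable_def case_prod_beta')

lemma predictable_power:
  assumes "predictable F M X"
  shows "predictable F M (\<lambda>t \<omega>. (X t \<omega>) ^ n)"
  using borel_measurable_power[OF assms[unfolded predictable_def]]
  by (simp add: predictable_def case_prod_beta')

lemma predictable_borel_measurable_pair:
  assumes X: "predictable F M X" and F: "\<And>s. 0 \<le> s \<Longrightarrow> sets (F s) \<subseteq> sets M"
  shows "(\<lambda>(\<omega>, t). indicator {0..} t * X t \<omega>) \<in> borel_measurable (M \<Otimes>\<^sub>M lborel)"
proof -
  define \<Omega> where "\<Omega> = {0::real..} \<times> space M"
  define G where "G = {{0::real} \<times> A | A. A \<in> sets (F 0)} \<union>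
        {{s<..t} \<times> A | s t A. 0 \<le> s \<and> s \<le> t \<and> A \<in> sets (F s)}"
  have G_pair: "G \<subseteq> sets (lborel \<Otimes>\<^sub>M M)"
    unfolding G_def using F by (auto intro!: pair_measureI)
  have "A \<subseteq> space M" if "A \<in> sets (F s)" "0 \<le> s" for A s
    using F[OF that(2)] that(1) sets.sets_into_space by blast
  then have G_\<Omega>: "G \<subseteq> Pow \<Omega>"
    unfolding G_def \<Omega>_def by fastforce
  have \<Omega>_pair: "\<Omega> \<in> sets (lborel \<Otimes>\<^sub>M M)" unfolding \<Omega>_def by (auto intro!: pair_measureI)
  have space_pred: "space (predictable_sigma F M) = \<Omega>"
    and sets_pred: "sets (predictable_sigma F M) = sigma_sets \<Omega> G"
    using G_\<Omega> by (simp_all add: predictable_sigma_def \<Omega>_def G_def)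
  have "sets (predictable_sigma F M) \<subseteq> sets (restrict_space (lborel \<Otimes>\<^sub>M M) \<Omega>)"
  proof
    fix A assume A: "A \<in> sets (predictable_sigma F M)"
    then have "A \<subseteq> \<Omega>" using sets.sets_into_space space_pred by blast
    moreover have "A \<in> sets (lborel \<Otimes>\<^sub>M M)"
      using A sets.sigma_sets_subset'[OF G_pair \<Omega>_pair] sets_pred by blast
    ultimately show "A \<in> sets (restrict_space (lborel \<Otimes>\<^sub>M M) \<Omega>)"
      by (auto simp: sets_restrict_space)
  qed
  then have "subalgebra (restrict_space (lborel \<Otimes>\<^sub>M M) \<Omega>) (predictable_sigma F M)"
    using space_pred sets.sets_into_space[OF \<Omega>_pair] by (auto simp: subalgebra_def space_restrict_space)
  then have "(\<lambda>(t, \<omega>). X t \<omega>) \<in> borel_measurable (restrict_space (lborel \<Otimes>\<^sub>M M) \<Omega>)"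
    using X unfolding predictable_def by (rule measurable_from_subalg)
  then have pair: "(\<lambda>x. indicator \<Omega> x * (\<lambda>(t, \<omega>). X t \<omega>) x) \<in> borel_measurable (lborel \<Otimes>\<^sub>M M)"
    using \<Omega>_pair by (subst (asm) borel_measurable_restrict_space_iff) auto
  have "(\<lambda>(\<omega>, t). indicator \<Omega> (t, \<omega>) * X t \<omega>) \<in> borel_measurable (M \<Otimes>\<^sub>M lborel)"
    using measurable_pair_swap[OF pair] by simp
  moreover have "indicator \<Omega> (t, \<omega>) = (indicator {0..} t :: real)" if "\<omega> \<in> space M" for t \<omega>
    using that by (simp add: \<Omega>_def indicator_def)
  ultimately show ?thesis
    by (subst measurable_cong[where g = "\<lambda>(\<omega>, t). indicator \<Omega> (t, \<omega>) * X t \<omega>"])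
      (auto simp: space_pair_measure)
qed

lemma (in prob_space) predictable_time_integral:
  assumes X: "predictable F M X" and F: "\<And>s. 0 \<le> s \<Longrightarrow> sets (F s) \<subseteq> sets M"
    and nonneg: "\<And>\<omega> t. \<omega> \<in> space M \<Longrightarrow> 0 \<le> t \<Longrightarrow> 0 \<le> X t \<omega>"
    and finite_integral: "(\<integral>\<^sup>+\<omega>. (\<integral>\<^sup>+r\<in>{0..T}. ennreal (X r \<omega>) \<partial>lborel) \<partial>M) < \<infinity>"
  shows "integrable M (\<lambda>\<omega>. set_lebesgue_integral lborel {0..T} (\<lambda>r. X r \<omega>))"
    and "expectation (\<lambda>\<omega>. set_lebesgue_integral lborel {0..T} (\<lambda>r. X r \<omega>)) =
      enn2real (\<integral>\<^sup>+\<omega>. (\<integral>\<^sup>+r\<in>{0..T}. ennreal (X r \<omega>) \<partial>lborel) \<partial>M)"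
proof -
  define K where "K = (\<lambda>(\<omega>, r). indicator {0..T} r * (indicator {0..} r * X r \<omega>))"
  define V where "V \<omega> = (\<integral>\<^sup>+r\<in>{0..T}. ennreal (X r \<omega>) \<partial>lborel)" for \<omega>
  define IV where "IV \<omega> = set_lebesgue_integral lborel {0..T} (\<lambda>r. X r \<omega>)" for \<omega>
  have K: "K \<in> borel_measurable (M \<Otimes>\<^sub>M lborel)"
    unfolding K_def using predictable_borel_measurable_pair[OF X F] by measurable
  have K_nonneg: "0 \<le> K (\<omega>, r)" if "\<omega> \<in> space M" for \<omega> r
    using nonneg[OF that] by (simp add: K_def indicator_def)
  have V_eq: "V \<omega> = (\<integral>\<^sup>+r. ennreal (K (\<omega>, r)) \<partial>lborel)" for \<omega>
    by (auto simp: V_def K_def intro!: nn_integral_cong split: split_indicator)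
  have V_M: "V \<in> borel_measurable M"
    unfolding V_eq by (intro lborel.borel_measurable_nn_integral_fst measurable_compose[OF K]) simp
  have IV_eq: "IV \<omega> = enn2real (V \<omega>)" if "\<omega> \<in> space M" for \<omega>
  proof -
    have "IV \<omega> = integral\<^sup>L lborel (\<lambda>r. K (\<omega>, r))"
      unfolding IV_def K_def set_lebesgue_integral_def
      by (intro Bochner_Integration.integral_cong) (auto split: split_indicator)
    then show ?thesis
      using integral_eq_nn_integral[OF measurable_Pair2[OF K that]] K_nonneg[OF that] V_eq by simp
  qed
  have IV_M: "IV \<in> borel_measurable M"
    using borel_measurable_enn2real[OF V_M] by (subst measurable_cong[OF IV_eq])
  have "AE \<omega> in M. V \<omega> \<noteq> \<infinity>"
    using finite_integral by (intro nn_integral_PInf_AE V_M) (simp add: V_def)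
  then have "(\<integral>\<^sup>+\<omega>. ennreal (IV \<omega>) \<partial>M) = (\<integral>\<^sup>+\<omega>. V \<omega> \<partial>M)"
    by (intro nn_integral_cong_AE) (auto simp: IV_eq less_top)
  moreover have IV_nonneg: "0 \<le> IV \<omega>" if "\<omega> \<in> space M" for \<omega>
    using IV_eq[OF that] by simp
  ultimately show "integrable M (\<lambda>\<omega>. set_lebesgue_integral lborel {0..T} (\<lambda>r. X r \<omega>))"
    and "expectation (\<lambda>\<omega>. set_lebesgue_integral lborel {0..T} (\<lambda>r. X r \<omega>)) =
      enn2real (\<integral>\<^sup>+\<omega>. (\<integral>\<^sup>+r\<in>{0..T}. ennreal (X r \<omega>) \<partial>lborel) \<partial>M)"
    using finite_integral IV_M by (auto simp: IV_def[symmetric] V_def[symmetric] integrableI_nonneg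
        integral_eq_nn_integral)
qed

lemma has_intensity_nn_integral_Icc:
  assumes "has_intensity M F N lam" "predictable F M C"
    and "\<And>\<omega> t. \<omega> \<in> space M \<Longrightarrow> 0 \<le> t \<Longrightarrow> 0 \<le> C t \<omega>" and "0 \<le> t"
  shows "(\<integral>\<^sup>+\<omega>. ennreal (\<Sum>s\<in>{s \<in> jump_times N \<omega>. s \<le> t}. C s \<omega>) \<partial>M) =
    (\<integral>\<^sup>+\<omega>. (\<integral>\<^sup>+s\<in>{0..t}. ennreal (C s \<omega> * lam s \<omega>) \<partial>lborel) \<partial>M)"
proof -
  have "(\<integral>\<^sup>+s\<in>{0<..t}. f s \<partial>lborel) = (\<integral>\<^sup>+s\<in>{0..t}. f s \<partial>lborel)" for f :: "real \<Rightarrow> ennreal"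
    by (intro nn_integral_cong_AE AE_mp[OF AE_lborel_singleton[of 0] AE_I2])
      (auto split: split_indicator)
  then show ?thesis
    using assms unfolding has_intensity_def by auto
qed

section \<open>Second moment of the jump integral\<close>

lemma sum_jump_times_levels:
  assumes "counting_path (\<lambda>t. N t \<omega>)" "0 \<le> T"
  shows "(\<Sum>u\<in>{u \<in> jump_times N \<omega>. u \<le> T}. h u (N u \<omega>)) =
    (\<Sum>k\<in>{1..N T \<omega>}. h (first_passage (\<lambda>t. N t \<omega>) k) k)"
  using counting_path.sum_over_jumps[OF assms] by (simp add: jump_times_eq_path_jumps)

lemma jump_integral_levels:
  assumes "counting_path (\<lambda>t. N t \<omega>)" "0 \<le> T"
  shows "jump_integral N B sig 0 T \<omega> =
    (\<Sum>k\<in>{1..N T \<omega>}. sig (first_passage (\<lambda>t. N t \<omega>) k) \<omega> * unit_increment B k \<omega>)"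
proof -
  have "{u \<in> jump_times N \<omega>. 0 < u \<and> u \<le> T} = {u \<in> jump_times N \<omega>. u \<le> T}"
    by (auto simp: jump_times_def)
  then show ?thesis
    using sum_jump_times_levels[where N = N and \<omega> = \<omega>, OF assms, of "\<lambda>u k. sig u \<omega> * unit_increment B k \<omega>"]
    by (simp add: jump_integral_def unit_increment_def)
qed

lemma (in prob_space) jump_integral_isometry:
  assumes N: "counting_process M N" and B: "brownian_motion M B"
    and sig_cont: "\<And>\<omega>. \<omega> \<in> space M \<Longrightarrow> continuous_on {0..} (\<lambda>t. sig t \<omega>)"
    and indep: "indep_set
        (sigma_sets (space M) {B t -` A \<inter> space M | t A. 0 \<le> t \<and> A \<in> sets borel})
        (sigma_sets (space M)
           ({N t -` A \<inter> space M | t A. 0 \<le> t} \<union>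
            {sig t -` A \<inter> space M | t A. 0 \<le> t \<and> A \<in> sets borel}))"
    and T: "0 \<le> T"
    and finite_energy: "(\<integral>\<^sup>+\<omega>. ennreal (\<Sum>s\<in>{s \<in> jump_times N \<omega>. s \<le> T}. (sig s \<omega>)\<^sup>2) \<partial>M) < \<infinity>"
  shows "jump_integral N B sig 0 T \<in> borel_measurable M"
    and "(\<integral>\<^sup>+\<omega>. ennreal ((jump_integral N B sig 0 T \<omega>)\<^sup>2) \<partial>M) =
    (\<integral>\<^sup>+\<omega>. ennreal (\<Sum>s\<in>{s \<in> jump_times N \<omega>. s \<le> T}. (sig s \<omega>)\<^sup>2) \<partial>M)"
proof -
  define GU where "GU = {B t -` A \<inter> space M | t A. 0 \<le> t \<and> A \<in> sets borel}"
  define GG where "GG = {N t -` A \<inter> space M | t A. 0 \<le> t} \<union>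
    {sig t -` A \<inter> space M | t A. 0 \<le> t \<and> A \<in> sets borel}"
  define MU where "MU = sigma (space M) GU"
  define MG where "MG = sigma (space M) GG"
  have G: "GU \<subseteq> Pow (space M)" "GG \<subseteq> Pow (space M)"
    by (auto simp: GU_def GG_def)
  note indep_sub = indep_set_sigma_subalgebras[OF indep[folded GU_def GG_def] G, folded MU_def MG_def]
  have space_sets: "space MU = space M" "sets MU = sigma_sets (space M) GU"
    "space MG = space M" "sets MG = sigma_sets (space M) GG"
    using G by (simp_all add: MU_def MG_def)
  have N_MG: "N t \<in> measurable MG (count_space UNIV)" if "0 \<le> t" for t
    using that by (intro measurableI) (auto simp: space_sets GG_def intro!: sigma_sets.Basic)
  have sig_MG: "sig t \<in> borel_measurable MG" if "0 \<le> t" for t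
    using that by (intro measurableI) (auto simp: space_sets GG_def intro!: sigma_sets.Basic)
  have "B t \<in> borel_measurable MU" if "0 \<le> t" for t
    using that by (intro measurableI) (auto simp: space_sets GU_def intro!: sigma_sets.Basic)
  then have U_MU: "unit_increment B k \<in> borel_measurable MU" if "1 \<le> k" for k
    using that unfolding unit_increment_def[abs_def] by auto
  define g where "g k \<omega> =
    (if k \<in> {1..N T \<omega>} then sig (first_passage (\<lambda>t. N t \<omega>) k) \<omega> else 0)" for k \<omega>
  have g_MG: "g k \<in> borel_measurable MG" for k
    unfolding g_def using counting_process_path[OF N] sig_cont N_MG sig_MG T
    by (intro measurable_first_passage_value) (auto simp: space_sets)
  have A_eq: "jump_integral N B sig 0 T \<omega> = (\<Sum>k\<in>{1..N T \<omega>}. g k \<omega> * unit_increment B k \<omega>)"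
    and S_eq: "(\<Sum>s\<in>{s \<in> jump_times N \<omega>. s \<le> T}. (sig s \<omega>)\<^sup>2) = (\<Sum>k\<in>{1..N T \<omega>}. (g k \<omega>)\<^sup>2)"
    if "\<omega> \<in> space M" for \<omega>
    using jump_integral_levels[where N = N and \<omega> = \<omega>, OF counting_process_path[OF N that] T]
      sum_jump_times_levels[where N = N and \<omega> = \<omega>, OF counting_process_path[OF N that] T, of "\<lambda>u k. (sig u \<omega>)\<^sup>2"]
    by (simp_all add: g_def)
  have "(\<integral>\<^sup>+\<omega>. ennreal (\<Sum>k\<in>{1..N T \<omega>}. (g k \<omega>)\<^sup>2) \<partial>M) < \<infinity>"
    using finite_energy by (simp add: S_eq cong: nn_integral_cong_simp)
  then have "(\<integral>\<^sup>+\<omega>. ennreal ((\<Sum>k\<in>{1..N T \<omega>}. g k \<omega> * unit_increment B k \<omega>)\<^sup>2) \<partial>M) =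
      (\<integral>\<^sup>+\<omega>. ennreal (\<Sum>k\<in>{1..N T \<omega>}. (g k \<omega>)\<^sup>2) \<partial>M)"
    by (intro indep_random_sum_isometry[OF indep_sub N_MG[OF T]] g_MG U_MU
        unit_increments_orthonormal[OF B])
  then show "(\<integral>\<^sup>+\<omega>. ennreal ((jump_integral N B sig 0 T \<omega>)\<^sup>2) \<partial>M) =
    (\<integral>\<^sup>+\<omega>. ennreal (\<Sum>s\<in>{s \<in> jump_times N \<omega>. s \<le> T}. (sig s \<omega>)\<^sup>2) \<partial>M)"
    by (simp add: A_eq S_eq cong: nn_integral_cong_simp)
  have "(\<lambda>\<omega>. \<Sum>k\<in>{1..N T \<omega>}. g k \<omega> * unit_increment B k \<omega>) \<in> borel_measurable M"
    using measurable_from_subalg[OF indep_sub(3) g_MG] measurable_from_subalg[OF indep_sub(2) U_MU]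
    by (intro borel_measurable_random_sum measurable_from_subalg[OF indep_sub(3) N_MG[OF T]]) auto
  moreover have "jump_integral N B sig 0 T \<in> borel_measurable M \<longleftrightarrow>
      (\<lambda>\<omega>. \<Sum>k\<in>{1..N T \<omega>}. g k \<omega> * unit_increment B k \<omega>) \<in> borel_measurable M"
    by (rule measurable_cong) (rule A_eq)
  ultimately show "jump_integral N B sig 0 T \<in> borel_measurable M"
    by simp
qed

theorem proposition2:
  fixes M :: "'a measure"
    and Z :: "nat \<Rightarrow> real \<Rightarrow> 'a \<Rightarrow> real" and m :: nat
    and N :: "real \<Rightarrow> 'a \<Rightarrow> nat"
    and lam sig B P :: "real \<Rightarrow> 'a \<Rightarrow> real"
    and T :: real
  defines "F \<equiv> factor_filtration M Z m"
  assumes prob: "prob_space M"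
    and Z_meas: "\<And>i s. i < m \<Longrightarrow> Z i s \<in> borel_measurable M"
    and T: "0 \<le> T"
    \<comment> \<open>(a) N: adapted counting process with unit jumps and intensity lam\<close>
    and N_count: "counting_process M N"
    and N_adapted: "\<And>t. 0 \<le> t \<Longrightarrow> N t \<in> measurable (F t) (count_space UNIV)"
    and N_intensity: "has_intensity M F N lam"
    and lam_pos: "\<And>\<omega> t. \<omega> \<in> space M \<Longrightarrow> 0 \<le> t \<Longrightarrow> 0 < lam t \<omega>"
    and lam_pred: "predictable F M lam"
    and lam_lc: "\<And>\<omega> t. \<omega> \<in> space M \<Longrightarrow> 0 < t \<Longrightarrow> continuous (at_left t) (\<lambda>s. lam s \<omega>)"
    and lam_rl: "\<And>\<omega> t. \<omega> \<in> space M \<Longrightarrow> 0 \<le> t \<Longrightarrow> \<exists>l. ((\<lambda>s. lam s \<omega>) \<longlongrightarrow> l) (at_right t)"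
    and lam_int: "\<And>t. 0 \<le> t \<Longrightarrow>
        AE \<omega> in M. (\<integral>\<^sup>+ s\<in>{0..t}. ennreal (lam s \<omega>) \<partial>lborel) < \<infinity>"
    \<comment> \<open>(b) B: Brownian motion with B(N(t)) adapted\<close>
    and B_bm: "brownian_motion M B"
    and BN_adapted: "\<And>t. 0 \<le> t \<Longrightarrow> (\<lambda>\<omega>. B (real (N t \<omega>)) \<omega>) \<in> borel_measurable (F t)"
    \<comment> \<open>(c) sig: positive, continuous, predictable\<close>
    and sig_pos: "\<And>\<omega> t. \<omega> \<in> space M \<Longrightarrow> 0 \<le> t \<Longrightarrow> 0 < sig t \<omega>"
    and sig_cont: "\<And>\<omega>. \<omega> \<in> space M \<Longrightarrow> continuous_on {0..} (\<lambda>t. sig t \<omega>)"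
    and sig_pred: "predictable F M sig"
    \<comment> \<open>B independent of (N, sig)\<close>
    and B_indep: "prob_space.indep_set M
        (sigma_sets (space M) {B t -` A \<inter> space M | t A. 0 \<le> t \<and> A \<in> sets borel})
        (sigma_sets (space M)
           ({N t -` A \<inter> space M | t A. 0 \<le> t} \<union>
            {sig t -` A \<inter> space M | t A. 0 \<le> t \<and> A \<in> sets borel}))"
    \<comment> \<open>moment conditions\<close>
    and mom1: "\<And>t. 0 \<le> t \<Longrightarrow> t \<le> T \<Longrightarrow>
        (\<integral>\<^sup>+ \<omega>. (\<integral>\<^sup>+ r\<in>{t..T}. ennreal ((sig r \<omega>)\<^sup>2 * lam r \<omega>) \<partial>lborel) \<partial>M) < \<infinity>"
    and mom2: "\<And>t. 0 \<le> t \<Longrightarrow> t \<le> T \<Longrightarrow> (\<integral>\<^sup>+ \<omega>. ennreal ((sig t \<omega>) ^ 4) \<partial>M) < \<infinity>"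
    and mom3: "\<And>t. 0 \<le> t \<Longrightarrow> t \<le> T \<Longrightarrow>
        (\<integral>\<^sup>+ \<omega>. (\<integral>\<^sup>+ r\<in>{0..t}. ennreal ((sig r \<omega>) ^ 4 * lam r \<omega>) \<partial>lborel) \<partial>M) < \<infinity>"
    \<comment> \<open>dP(t) = sig(t) dB(N(t)) on [0,T]\<close>
    and P_def: "\<And>\<omega> t. \<omega> \<in> space M \<Longrightarrow> 0 \<le> t \<Longrightarrow> t \<le> T \<Longrightarrow>
        P t \<omega> = P 0 \<omega> + jump_integral N B sig 0 t \<omega>"
  shows "prob_space.expectation M
           (\<lambda>\<omega>. (P T \<omega> - P 0 \<omega>)\<^sup>2 - set_lebesgue_integral lborel {0..T} (\<lambda>r. (sig r \<omega>)\<^sup>2 * lam r \<omega>))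
         = 0"
proof -
  interpret prob_space M by (rule prob)
  define A where "A = jump_integral N B sig 0 T"
  define IV where "IV = (\<lambda>\<omega>. set_lebesgue_integral lborel {0..T} (\<lambda>r. (sig r \<omega>)\<^sup>2 * lam r \<omega>))"
  let ?energy = "\<lambda>\<omega>. \<integral>\<^sup>+r\<in>{0..T}. ennreal ((sig r \<omega>)\<^sup>2 * lam r \<omega>) \<partial>lborel"
  have F_sets: "sets (F s) \<subseteq> sets M" for s
    unfolding F_def by (rule sets_factor_filtration_subset[OF Z_meas])
  have compensator: "(\<integral>\<^sup>+\<omega>. ennreal (\<Sum>s\<in>{s \<in> jump_times N \<omega>. s \<le> T}. (sig s \<omega>)\<^sup>2) \<partial>M) =
      (\<integral>\<^sup>+\<omega>. ?energy \<omega> \<partial>M)"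
    using T by (intro has_intensity_nn_integral_Icc[OF N_intensity predictable_power[OF sig_pred]]) auto
  have energy_finite: "(\<integral>\<^sup>+\<omega>. ?energy \<omega> \<partial>M) < \<infinity>"
    using mom1[of 0] T by simp
  have integrand_nonneg: "0 \<le> (sig t \<omega>)\<^sup>2 * lam t \<omega>" if "\<omega> \<in> space M" "0 \<le> t" for \<omega> t
    using lam_pos[OF that] by simp
  note IV = predictable_time_integral[OF predictable_mult[OF predictable_power[OF sig_pred] lam_pred]
      F_sets integrand_nonneg energy_finite, folded IV_def]
  note A = jump_integral_isometry[OF N_count B_bm sig_cont B_indep T, folded A_def]
  have A2: "integrable M (\<lambda>\<omega>. (A \<omega>)\<^sup>2)" "expectation (\<lambda>\<omega>. (A \<omega>)\<^sup>2) = expectation IV"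
    using A compensator energy_finite IV(2) by (simp_all add: integrableI_nonneg integral_eq_nn_integral)
  have "expectation (\<lambda>\<omega>. (P T \<omega> - P 0 \<omega>)\<^sup>2 - IV \<omega>) = expectation (\<lambda>\<omega>. (A \<omega>)\<^sup>2 - IV \<omega>)"
    using P_def[OF _ T order_refl] by (intro Bochner_Integration.integral_cong) (simp_all add: A_def)
  also have "\<dots> = 0"
    using A2 IV(1) by simp
  finally show ?thesis by (simp add: IV_def)
qed

end
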